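(* Let the standing assumptions (listed in the context) hold. Then: 1) If Algorithm SLBFGS is applied with $\epsilon=0$, then it either terminates after finitely many iterations with an $x_k$ that satisfies $\nabla\mathcal{J}(x_k)=0$ or it generates a sequence $(x_k)$ such that $\lim_{k\to\infty}\|\nabla\mathcal{J}(x_k)\| = 0$. In particular, every cluster point of $(x_k)$ is stationary. 2) If Algorithm SLBFGS is applied with $\epsilon>0$, then it terminates after finitely many iterations with an $x_k$ that satisfies $\|\nabla\mathcal{J}(x_k)\|\leq\epsilon$.
   Context: Let $\mathcal{X}$ be a Hilbert space and $\mathcal{J}:\mathcal{X}\to\mathbb{R}$. Algorithm SLBFGS (structured inverse L-BFGS): inputs $x_0\in\mathcal{X}$, $\epsilon\geq0$, $\ell\in\mathbb{N}_0$, $c_0\geq 0$, $C_0\in[c_0,\infty]$, $c_s,c_1,c_2>0$; let $\tau_0>0$. For $k=0,1,2,\ldots$: let $m=\max\{0,k-\ell\}$; choose a symmetric positive semi-definite bounded linear operator $S_k$; set $B_k^{(0)}=\tau_k I+S_k$; let $B_k$ be obtained from $B_k^{(0)}$ and the currently stored pairs $(s_j,y_j)$, $m\le j\le k-1$, by successive L-BFGS updates $B\mapsto B+\frac{yy^T}{y^Ts}-\frac{Bss^TB}{s^TBs}$; set $d_k=-B_k^{-1}\nabla\mathcal{J}(x_k)$; compute a step length $\alpha_k>0$ by a line search; set $s_k=\alpha_kd_k$, $x_{k+1}=x_k+s_k$, $y_k=\nabla\mathcal{J}(x_{k+1})-\nabla\mathcal{J}(x_k)$; store $(s_k,y_k)$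 only if $y_k^Ts_k>c_s\|s_k\|^2$; if $k\ge\ell$ remove $(s_m,y_m)$ from storage; stop with output $x_{k+1}$ if $\|\nabla\mathcal{J}(x_{k+1})\|\le\epsilon$; set $z_k=y_k-S_{k+1}s_k$, $\omega^l_{k+1}=\min\{c_0,c_1\|\nabla\mathcal{J}(x_{k+1})\|^{c_2}\}$, $\omega^u_{k+1}=\max\{C_0,(c_1\|\nabla\mathcal{J}(x_{k+1})\|^{c_2})^{-1}\}$; with $P(t)=\min\{\max\{t,\omega^l_{k+1}\},\omega^u_{k+1}\}$ and $\rho=z_k^Ts_k$ let $\tau^s=P(\rho/\|s_k\|^2)$, $\tau^g=P(\|z_k\|/\|s_k\|)$, $\tau^z=P(\|z_k\|^2/\rho)$; if $\rho>0$ choose $\tau_{k+1}\in[\tau^s,\tau^z]$, else choose $\tau_{k+1}\in[\tau^s,\tau^g]$. Line searches: Armijo with backtracking means, for fixed $\beta,\sigma\in(0,1)$, $\alpha_k$ is the largest number in $\{1,\beta,\beta^2,\ldots\}$ with $\mathcal{J}(x_{k+1})\le\mathcal{J}(x_k)+\alpha_k\sigma\nabla\mathcal{J}(x_k)^Td_k$; the Wolfe–Powell conditions are this Armijo inequality together with $\nabla\mathcal{J}(x_{k+1})^Td_k\ge\eta\nabla\mathcal{J}(x_k)^Td_k$ for fixed $\eta\in(\sigma,1)$. Let $\Omega=\{x:\mathcal{J}(x)\le\mathcal{J}(x_0)\}$ and $\Omega_\delta=\{x:\exists\hat x\in\Omega,\ \|x-\hat x\|<\delta\}$. Standing assumptions: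 1) $\mathcal{J}$ is continuously differentiable and bounded below; 2) $\nabla\mathcal{J}$ is Lipschitz continuous on $\Omega$ with constant $L>0$; 3) $(\|S_k\|)$ is bounded; 4) the step sizes consistently satisfy the Armijo condition computed by backtracking, or consistently satisfy the Wolfe–Powell conditions; in the Armijo case there is $\delta>0$ such that $\mathcal{J}$ or $\nabla\mathcal{J}$ is uniformly continuous on $\Omega_\delta$; 5) $c_0=0$ is only chosen if then $\sup_k\|(B_k^{(0)})^{-1}\|<\infty$; 6) $C_0=\infty$ is only chosen if either the interval $[\tau^s,\tau^z]$ is replaced by $[\tau^s,\tau^g]$, or $\mathcal{J}$ is twice continuously differentiable, $\overline{G_k}:=\int_0^1\nabla^2\mathcal{J}(x_k+ts_k)\,dt-S_{k+1}$ is symmetric positive semi-definite for all $k$ and $(\|\overline{G_k}\|)$ is bounded. *)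

theory Defs
  imports "HOL-Analysis.Analysis"
begin

definition sym_psd :: "('a::real_inner \<Rightarrow>\<^sub>L 'a) \<Rightarrow> bool" where
  "sym_psd A \<longleftrightarrow> (\<forall>v w. blinfun_apply A v \<bullet> w = v \<bullet> blinfun_apply A w)
                  \<and> (\<forall>v. 0 \<le> v \<bullet> blinfun_apply A v)"

definition lbfgs_update :: "('a::real_inner \<Rightarrow> 'a) \<Rightarrow> 'a \<Rightarrow> 'a \<Rightarrow> ('a \<Rightarrow> 'a)" where
  "lbfgs_update B s y =
     (\<lambda>v. B v + ((y \<bullet> v) / (y \<bullet> s)) *\<^sub>R y - ((s \<bullet> B v) / (s \<bullet> B s)) *\<^sub>R B s)"

definition slbfgs_B0 :: "(nat \<Rightarrow> real) \<Rightarrow> (nat \<Rightarrow> ('a::real_inner \<Rightarrow>\<^sub>L 'a)) \<Rightarrow> nat \<Rightarrow> ('a \<Rightarrow> 'a)" where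
  "slbfgs_B0 tau S k = (\<lambda>v. tau k *\<^sub>R v + blinfun_apply (S k) v)"

definition slbfgs_stored :: "('a::real_inner \<Rightarrow> 'a) \<Rightarrow> real \<Rightarrow> (nat \<Rightarrow> 'a) \<Rightarrow> nat \<Rightarrow> bool" where
  "slbfgs_stored grad cs x j \<longleftrightarrow>
     (grad (x (Suc j)) - grad (x j)) \<bullet> (x (Suc j) - x j) > cs * (norm (x (Suc j) - x j))\<^sup>2"

text \<open>B_k: successive updates of B_k^(0) with the stored pairs j, m <= j <= k-1,
  m = max 0 (k - ell) (natural-number subtraction truncates at 0).\<close>
definition slbfgs_B ::
  "('a::real_inner \<Rightarrow> 'a) \<Rightarrow> nat \<Rightarrow> real \<Rightarrow> (nat \<Rightarrow> real) \<Rightarrow> (nat \<Rightarrow> ('a \<Rightarrow>\<^sub>L 'a))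
   \<Rightarrow> (nat \<Rightarrow> 'a) \<Rightarrow> nat \<Rightarrow> ('a \<Rightarrow> 'a)" where
  "slbfgs_B grad ell cs tau S x k =
     foldl (\<lambda>B j. if slbfgs_stored grad cs x j
                   then lbfgs_update B (x (Suc j) - x j) (grad (x (Suc j)) - grad (x j))
                   else B)
           (slbfgs_B0 tau S k) [k - ell..<k]"

text \<open>Iteration k is executed iff the algorithm has not stopped in iterations 0..k-1.\<close>
definition slbfgs_active :: "('a::real_normed_vector \<Rightarrow> 'a) \<Rightarrow> real \<Rightarrow> (nat \<Rightarrow> 'a) \<Rightarrow> nat \<Rightarrow> bool" where
  "slbfgs_active grad eps x k \<longleftrightarrow> (\<forall>j<k. eps < norm (grad (x (Suc j))))"

definition armijo_ok ::
  "('a::real_inner \<Rightarrow> real) \<Rightarrow> ('a \<Rightarrow> 'a) \<Rightarrow> real \<Rightarrow> 'a \<Rightarrow> 'a \<Rightarrow> real \<Rightarrow> bool" where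
  "armijo_ok J grad sgm xk dk a \<longleftrightarrow> J (xk + a *\<^sub>R dk) \<le> J xk + a * sgm * (grad xk \<bullet> dk)"

definition armijo_backtracking ::
  "('a::real_inner \<Rightarrow> real) \<Rightarrow> ('a \<Rightarrow> 'a) \<Rightarrow> real \<Rightarrow> real \<Rightarrow> 'a \<Rightarrow> 'a \<Rightarrow> real \<Rightarrow> bool" where
  "armijo_backtracking J grad beta sgm xk dk a \<longleftrightarrow>
     (\<exists>i::nat. a = beta ^ i \<and> armijo_ok J grad sgm xk dk (beta ^ i)
              \<and> (\<forall>j<i. \<not> armijo_ok J grad sgm xk dk (beta ^ j)))"

definition wolfe_powell ::
  "('a::real_inner \<Rightarrow> real) \<Rightarrow> ('a \<Rightarrow> 'a) \<Rightarrow> real \<Rightarrow> real \<Rightarrow> 'a \<Rightarrow> 'a \<Rightarrow> real \<Rightarrow> bool" where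
  "wolfe_powell J grad sgm eta xk dk a \<longleftrightarrow>
     0 < a \<and> armijo_ok J grad sgm xk dk a \<and> grad (xk + a *\<^sub>R dk) \<bullet> dk \<ge> eta * (grad xk \<bullet> dk)"

text \<open>Arguments: g = grad x_{k+1}, s = s_k, z = z_k, t = tau_{k+1}.
  If gvar is True the interval [tau^s, tau^z] is replaced by [tau^s, tau^g].
  Omega^u may be infinite (C0 = \<infinity>), hence the use of ereal.\<close>
definition slbfgs_tau_ok ::
  "bool \<Rightarrow> real \<Rightarrow> ereal \<Rightarrow> real \<Rightarrow> real \<Rightarrow> 'a::real_inner \<Rightarrow> 'a \<Rightarrow> 'a \<Rightarrow> real \<Rightarrow> bool" where
  "slbfgs_tau_ok gvar c0 C0 c1 c2 g s z t \<longleftrightarrow>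
     (let wl = min c0 (c1 * norm g powr c2);
          wu = max C0 (ereal (inverse (c1 * norm g powr c2)));
          P = (\<lambda>r::real. min (max (ereal r) (ereal wl)) wu);
          rho = z \<bullet> s;
          ts = P (rho / (norm s)\<^sup>2);
          tg = P (norm z / norm s);
          tz = P ((norm z)\<^sup>2 / rho)
      in if rho > 0 \<and> \<not> gvar then ts \<le> ereal t \<and> ereal t \<le> tz
         else ts \<le> ereal t \<and> ereal t \<le> tg)"

definition slbfgs_run ::
  "('a::{real_inner,complete_space} \<Rightarrow> real) \<Rightarrow> ('a \<Rightarrow> 'a) \<Rightarrow> real \<Rightarrow> nat \<Rightarrow> real \<Rightarrow> ereal
   \<Rightarrow> real \<Rightarrow> real \<Rightarrow> real \<Rightarrow> bool \<Rightarrow> real \<Rightarrow> real \<Rightarrow> real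
   \<Rightarrow> (nat \<Rightarrow> 'a) \<Rightarrow> (nat \<Rightarrow> 'a) \<Rightarrow> (nat \<Rightarrow> real) \<Rightarrow> (nat \<Rightarrow> real) \<Rightarrow> (nat \<Rightarrow> ('a \<Rightarrow>\<^sub>L 'a))
   \<Rightarrow> bool" where
  "slbfgs_run J grad eps ell c0 C0 cs c1 c2 armijo beta sgm eta x d alpha tau S \<longleftrightarrow>
     0 < tau 0 \<and> (\<forall>k. sym_psd (S k)) \<and>
     (\<forall>k. slbfgs_active grad eps x k \<longrightarrow>
        slbfgs_B grad ell cs tau S x k (d k) = - grad (x k) \<and>
        (if armijo then armijo_backtracking J grad beta sgm (x k) (d k) (alpha k)
         else wolfe_powell J grad sgm eta (x k) (d k) (alpha k)) \<and>
        x (Suc k) = x k + alpha k *\<^sub>R d k \<and>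
        (eps < norm (grad (x (Suc k))) \<longrightarrow>
           slbfgs_tau_ok False c0 C0 c1 c2 (grad (x (Suc k))) (x (Suc k) - x k)
             ((grad (x (Suc k)) - grad (x k)) - blinfun_apply (S (Suc k)) (x (Suc k) - x k))
             (tau (Suc k))))"

end

(*
  As long as the gradient stays above a threshold eps > 0, the operators B_k are uniformly
  well conditioned: the seed tau_k I + S_k is, because the safeguards keep tau_k in a compact
  subinterval of (0, oo) (or, for c0 = 0, because its inverse is bounded), and each of the at most
  ell BFGS updates with a stored pair (whose curvature is >= c_s and whose secant ratio is <= L)
  worsens the spectral bounds only by factors depending on c_s, L and the previous bounds.
  Hence d_k is a descent direction whose angle with the gradient is bounded away from 90 degrees,
  and either line search accepts a step bounded below; so every such iteration decreases J by a
  fixed amount. As J is bounded below, only finitely many iterations can have a large gradient.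

  For the backtracking Armijo search the Lipschitz bound on the level set suffices (the last
  rejected trial step is compared with a minimiser of the Armijo defect, which lies in the level
  set).
*)
theory Submission
  imports Defs
begin

section \<open>Symmetric positive semidefinite operators and BFGS updates\<close>

definition symmetric_op :: "('a::real_inner \<Rightarrow> 'a) \<Rightarrow> bool" where
  "symmetric_op B \<longleftrightarrow> (\<forall>v w. B v \<bullet> w = v \<bullet> B w)"

definition psd_op :: "('a::real_inner \<Rightarrow> 'a) \<Rightarrow> bool" where
  "psd_op B \<longleftrightarrow> (\<forall>v. 0 \<le> v \<bullet> B v)"

lemma sym_psd_iff: "sym_psd A \<longleftrightarrow> symmetric_op (blinfun_apply A) \<and> psd_op (blinfun_apply A)"
  by (simp add: sym_psd_def symmetric_op_def psd_op_def)

lemma quadratic_nonneg_imp_discriminant: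
  fixes p q r :: real
  assumes nonneg: "\<And>t. 0 \<le> p + 2*t*q + t^2*r" and "0 \<le> r"
  shows "q^2 \<le> p * r"
proof (cases "r = 0")
  case True
  have "q = 0"
  proof (rule ccontr)
    assume "q \<noteq> 0"
    have "0 \<le> p + 2*(-(p+1)/(2*q))*q" using nonneg[of "-(p+1)/(2*q)"] True by simp
    also have "\<dots> = -1" using \<open>q \<noteq> 0\<close> by (simp add: field_simps)
    finally show False by simp
  qed
  with True show ?thesis by simp
next
  case False
  with \<open>0 \<le> r\<close> have r: "r > 0" by simp
  have "0 \<le> p + 2*(-q/r)*q + (-q/r)^2*r" by (rule nonneg)
  also have "\<dots> = p - q^2/r" using r by (simp add: field_simps power2_eq_square)
  finally show ?thesis using r by (simp add: field_simps)
qed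

lemma quadratic_form_add_scaleR:
  assumes "linear B" "symmetric_op B"
  shows "(v + t *\<^sub>R s) \<bullet> B (v + t *\<^sub>R s) = v \<bullet> B v + 2*t*(s \<bullet> B v) + t^2*(s \<bullet> B s)"
proof -
  have "v \<bullet> B s = s \<bullet> B v" using assms(2) unfolding symmetric_op_def by (metis inner_commute)
  moreover have "B (v + t *\<^sub>R s) = B v + t *\<^sub>R B s" using assms(1) by (simp add: linear_add linear_scale)
  ultimately show ?thesis
    by (simp add: algebra_simps power2_eq_square inner_commute)
qed

lemma psd_cauchy_schwarz:
  assumes "linear B" "symmetric_op B" "psd_op B"
  shows "(s \<bullet> B v)^2 \<le> (v \<bullet> B v) * (s \<bullet> B s)"
  using assms(3) quadratic_form_add_scaleR[OF assms(1,2)] unfolding psd_op_def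
  by (intro quadratic_nonneg_imp_discriminant) metis+

lemma psd_norm_apply_sq_le:
  assumes "linear B" "symmetric_op B" "psd_op B" and bound: "\<And>v. norm (B v) \<le> N * norm v"
  shows "(norm (B v))^2 \<le> N * (v \<bullet> B v)"
proof (cases "B v = 0")
  case True
  then show ?thesis by simp
next
  case False
  have "B v \<bullet> B (B v) \<le> norm (B v) * norm (B (B v))" by (rule norm_cauchy_schwarz)
  also have "\<dots> \<le> N * (norm (B v))^2"
    using mult_left_mono[OF bound[of "B v"] norm_ge_zero[of "B v"]] by (simp add: power2_eq_square algebra_simps)
  finally have "B v \<bullet> B (B v) \<le> N * (norm (B v))^2" .
  moreover have "0 \<le> v \<bullet> B v" using assms(3) unfolding psd_op_def by simp
  ultimately have "((norm (B v))^2)^2 \<le> (N * (v \<bullet> B v)) * (norm (B v))^2"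
    using psd_cauchy_schwarz[OF assms(1-3), of "B v" v] mult_left_mono
    by (fastforce simp: power2_norm_eq_inner[symmetric] algebra_simps)
  then show ?thesis using False by (simp add: power2_eq_square)
qed

lemma psd_lower_bound_of_inverse_bound:
  assumes "linear B" "symmetric_op B" "psd_op B" and upper: "\<And>v. norm (B v) \<le> M * norm v"
    and "bij B" "bounded_linear (inv B)" "onorm (inv B) \<le> K"
  shows "1 / ((max K 1)^2 * max M 1) * (norm v)^2 \<le> v \<bullet> B v"
proof -
  have "v = inv B (B v)" using \<open>bij B\<close> by (simp add: bij_is_inj)
  then have "norm v \<le> onorm (inv B) * norm (B v)" using onorm[OF \<open>bounded_linear (inv B)\<close>, of "B v"] by simp
  also have "\<dots> \<le> max K 1 * norm (B v)" using \<open>onorm (inv B) \<le> K\<close> by (intro mult_right_mono) auto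
  finally have "(norm v)^2 \<le> (max K 1)^2 * (norm (B v))^2"
    by (metis norm_ge_zero power_mono power_mult_distrib)
  also have "\<dots> \<le> (max K 1)^2 * (max M 1 * (v \<bullet> B v))"
  proof (rule mult_left_mono)
    have "norm (B w) \<le> max M 1 * norm w" for w
      using upper[of w] by (smt (verit) mult_right_mono norm_ge_zero)
    then show "(norm (B v))^2 \<le> max M 1 * (v \<bullet> B v)" by (rule psd_norm_apply_sq_le[OF assms(1-3)])
  qed simp
  finally show ?thesis by (simp add: field_simps)
qed

lemma linear_lbfgs_update:
  assumes "linear B"
  shows "linear (lbfgs_update B s y)"
proof -
  interpret linear B by fact
  show ?thesis
    by (rule linearI)
       (simp_all add: lbfgs_update_def add scale algebra_simps add_divide_distrib)
qed

lemma symmetric_lbfgs_update: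
  assumes "symmetric_op B"
  shows "symmetric_op (lbfgs_update B s y)"
  unfolding symmetric_op_def
proof (intro allI)
  fix v w
  have sym: "\<And>v w. B v \<bullet> w = v \<bullet> B w" using assms unfolding symmetric_op_def by blast
  have "lbfgs_update B s y v \<bullet> w = B v \<bullet> w + (y \<bullet> v)/(y \<bullet> s)*(y \<bullet> w) - (s \<bullet> B v)/(s \<bullet> B s)*(B s \<bullet> w)"
    by (simp add: lbfgs_update_def inner_diff_left inner_add_left)
  also have "\<dots> = v \<bullet> B w + (y \<bullet> w)/(y \<bullet> s)*(v \<bullet> y) - (s \<bullet> B w)/(s \<bullet> B s)*(v \<bullet> B s)"
    unfolding sym[of v w] sym[of s w] sym[of s v] inner_commute[of v y] inner_commute[of v "B s"]
    by (simp add: mult.commute)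
  also have "\<dots> = v \<bullet> lbfgs_update B s y w"
    by (simp add: lbfgs_update_def inner_diff_right inner_add_right)
  finally show "lbfgs_update B s y v \<bullet> w = v \<bullet> lbfgs_update B s y w" .
qed

lemma lbfgs_update_quadratic_form:
  assumes "symmetric_op B"
  shows "v \<bullet> lbfgs_update B s y v = v \<bullet> B v + (y \<bullet> v)^2 / (y \<bullet> s) - (s \<bullet> B v)^2 / (s \<bullet> B s)"
proof -
  have "v \<bullet> B s = s \<bullet> B v" using assms unfolding symmetric_op_def by (metis inner_commute)
  then show ?thesis
    by (simp add: lbfgs_update_def inner_diff_right inner_add_right power2_eq_square inner_commute)
qed

lemma psd_lbfgs_update:
  assumes "linear B" "symmetric_op B" "psd_op B" "0 \<le> y \<bullet> s"
  shows "psd_op (lbfgs_update B s y)"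
  unfolding psd_op_def
proof
  fix v
  have "(s \<bullet> B v)^2 \<le> (v \<bullet> B v) * (s \<bullet> B s)" by (rule psd_cauchy_schwarz[OF assms(1-3)])
  moreover have "0 \<le> s \<bullet> B s" "0 \<le> v \<bullet> B v" using assms(3) unfolding psd_op_def by auto
  ultimately have "(s \<bullet> B v)^2 / (s \<bullet> B s) \<le> v \<bullet> B v"
    by (cases "s \<bullet> B s = 0") (simp_all add: divide_le_eq mult.commute)
  moreover have "0 \<le> (y \<bullet> v)^2 / (y \<bullet> s)" using assms(4) by simp
  ultimately show "0 \<le> v \<bullet> lbfgs_update B s y v" unfolding lbfgs_update_quadratic_form[OF assms(2)] by linarith
qed

lemma lbfgs_update_quadratic_form_split:
  assumes "linear B" "symmetric_op B" "s \<bullet> B s \<noteq> 0"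
    and w_def: "w = v - ((s \<bullet> B v) / (s \<bullet> B s)) *\<^sub>R s"
  shows "v \<bullet> lbfgs_update B s y v = w \<bullet> B w + (y \<bullet> v)^2 / (y \<bullet> s)"
proof -
  define a where "a = (s \<bullet> B v) / (s \<bullet> B s)"
  have "w \<bullet> B w = v \<bullet> B v + 2*(-a)*(s \<bullet> B v) + (-a)^2*(s \<bullet> B s)"
    unfolding w_def a_def[symmetric] using quadratic_form_add_scaleR[OF assms(1,2), of v "-a" s] by simp
  also have "\<dots> = v \<bullet> B v - (s \<bullet> B v)^2 / (s \<bullet> B s)"
    using assms(3) unfolding a_def by (simp add: field_simps power2_eq_square)
  finally show ?thesis unfolding lbfgs_update_quadratic_form[OF assms(2)] by simp
qed

lemma sq_norm_add_le: "(norm (u + v))^2 \<le> 2 * ((norm u)^2 + (norm v)^2)"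
proof -
  have "(norm (u + v))^2 \<le> (norm u + norm v)^2" by (simp add: norm_triangle_ineq power_mono)
  also have "\<dots> \<le> 2 * ((norm u)^2 + (norm v)^2)"
    using zero_le_power2[of "norm u - norm v"] by (simp add: power2_eq_square algebra_simps)
  finally show ?thesis .
qed

lemma curvature_term_lower_bound:
  assumes curv: "cs * (norm s)^2 \<le> y \<bullet> s" and lip: "norm y \<le> L * norm s" and "0 < cs" "s \<noteq> 0"
  shows "cs/2 * (norm (a *\<^sub>R s))^2 - L^2/cs * (norm w)^2 \<le> (y \<bullet> (w + a *\<^sub>R s))^2 / (y \<bullet> s)"
proof -
  define Y where "Y = y \<bullet> s"
  have ns: "0 < (norm s)^2" using \<open>s \<noteq> 0\<close> by simp
  have Y: "0 < Y" using curv \<open>0 < cs\<close> ns unfolding Y_def by (smt (verit) mult_pos_pos)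
  have "(a*Y)^2/2 - (y \<bullet> w)^2 \<le> (y \<bullet> w + a*Y)^2"
    using zero_le_power2[of "y \<bullet> w + a*Y/2"] by (simp add: power2_eq_square algebra_simps)
  then have "((a*Y)^2/2 - (y \<bullet> w)^2) / Y \<le> (y \<bullet> (w + a *\<^sub>R s))^2 / Y"
    using Y unfolding Y_def by (simp add: inner_add_right divide_right_mono)
  moreover have "cs/2 * (norm (a *\<^sub>R s))^2 \<le> (a*Y)^2/2 / Y"
  proof -
    have "(norm (a *\<^sub>R s))^2 = a^2 * (norm s)^2" by (simp add: power_mult_distrib)
    moreover have "(a*Y)^2/2 / Y = a^2 * Y / 2" using Y by (simp add: power2_eq_square)
    ultimately show ?thesis using mult_left_mono[OF curv, of "a^2"] unfolding Y_def by (simp add: algebra_simps)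
  qed
  moreover have "(y \<bullet> w)^2 / Y \<le> L^2/cs * (norm w)^2"
  proof -
    have "\<bar>y \<bullet> w\<bar> \<le> L * norm s * norm w"
      using Cauchy_Schwarz_ineq2[of y w] mult_right_mono[OF lip norm_ge_zero[of w]] by linarith
    then have "(y \<bullet> w)^2 \<le> L^2 * (norm s)^2 * (norm w)^2"
      by (metis abs_ge_zero power2_abs power_mono power_mult_distrib)
    then have "(y \<bullet> w)^2 / Y \<le> L^2 * (norm s)^2 * (norm w)^2 / (cs * (norm s)^2)"
      using Y curv \<open>0 < cs\<close> ns unfolding Y_def by (intro frac_le) auto
    also have "\<dots> = L^2/cs * (norm w)^2" using ns by (simp add: field_simps)
    finally show ?thesis .
  qed
  ultimately show ?thesis unfolding Y_def by (simp add: diff_divide_distrib)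
qed

lemma lbfgs_update_lower_bound:
  assumes "linear B" "symmetric_op B" and lower: "\<And>v. m * (norm v)^2 \<le> v \<bullet> B v"
    and "0 < m" "0 < cs" and curv: "cs * (norm s)^2 \<le> y \<bullet> s" and lip: "norm y \<le> L * norm s"
    and "s \<noteq> 0"
  shows "min m (cs/2) / (2 * (L^2/(cs*m) + 1)) * (norm v)^2 \<le> v \<bullet> lbfgs_update B s y v"
proof -
  define a where "a = (s \<bullet> B v) / (s \<bullet> B s)"
  define w where "w = v - a *\<^sub>R s"
  define A where "A = v \<bullet> lbfgs_update B s y v"
  define W where "W = (norm w)^2"
  define U where "U = (norm (a *\<^sub>R s))^2"
  define K where "K = L^2/(cs*m)"
  have "0 < m * (norm s)^2" using \<open>0 < m\<close> \<open>s \<noteq> 0\<close> by simp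
  then have "s \<bullet> B s \<noteq> 0" using lower[of s] by linarith
  then have A: "A = w \<bullet> B w + (y \<bullet> v)^2 / (y \<bullet> s)"
    unfolding A_def by (rule lbfgs_update_quadratic_form_split[OF assms(1,2)]) (simp add: w_def a_def)
  have "0 \<le> y \<bullet> s" using curv \<open>0 < cs\<close> by (smt (verit) mult_nonneg_nonneg zero_le_power2)
  then have A_ge_W: "m * W \<le> A" unfolding A W_def using lower[of w] by (smt (verit) divide_nonneg_nonneg zero_le_power2)
  have "v = w + a *\<^sub>R s" unfolding w_def by simp
  then have "cs/2 * U - L^2/cs * W \<le> (y \<bullet> v)^2 / (y \<bullet> s)"
    unfolding U_def W_def by (simp only: curvature_term_lower_bound[OF curv lip \<open>0 < cs\<close> \<open>s \<noteq> 0\<close>])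
  then have A_ge_UW: "m * W + cs/2 * U - L^2/cs * W \<le> A" unfolding A W_def using lower[of w] by linarith
  have "K * (m * W) = L^2/cs * W" unfolding K_def using \<open>0 < m\<close> by (simp add: field_simps)
  moreover have "0 \<le> K" unfolding K_def using \<open>0 < cs\<close> \<open>0 < m\<close> by simp
  ultimately have "m * W + cs/2 * U \<le> (K + 1) * A"
    using A_ge_UW mult_left_mono[OF A_ge_W, of K] by (simp add: algebra_simps)
  moreover have "min m (cs/2) * (W + U) \<le> m * W + cs/2 * U"
  proof -
    have "min m (cs/2) * W \<le> m * W" "min m (cs/2) * U \<le> cs/2 * U"
      unfolding W_def U_def by (intro mult_right_mono; simp)+
    then show ?thesis by (simp add: distrib_left)
  qed
  moreover have "min m (cs/2) * (norm v)^2 \<le> min m (cs/2) * (2 * (W + U))"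
    using \<open>v = w + a *\<^sub>R s\<close> sq_norm_add_le[of w "a *\<^sub>R s"] \<open>0 < m\<close> \<open>0 < cs\<close>
    unfolding W_def U_def by (intro mult_left_mono) auto
  ultimately have "min m (cs/2) * (norm v)^2 \<le> (2 * (K + 1)) * A" by linarith
  then show ?thesis using \<open>0 \<le> K\<close> unfolding A_def K_def by (simp add: field_simps)
qed

lemma norm_ratio_scaleR_le:
  assumes num: "\<bar>p\<bar> \<le> A * norm s * norm v" and vec: "norm w \<le> A' * norm s"
    and den: "c * (norm s)^2 \<le> q" and "0 < c" "s \<noteq> 0"
  shows "norm ((p / q) *\<^sub>R w) \<le> A * A' / c * norm v"
proof -
  have "0 < c * (norm s)^2" using \<open>0 < c\<close> \<open>s \<noteq> 0\<close> by simp
  then have "0 < q" using den by linarith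
  have "0 \<le> A * norm s * norm v" using num abs_ge_zero order_trans by blast
  then have "\<bar>p\<bar> * norm w \<le> (A * norm s * norm v) * (A' * norm s)"
    using num vec by (intro mult_mono) auto
  then have "\<bar>p\<bar> * norm w / q \<le> (A * norm s * norm v) * (A' * norm s) / (c * (norm s)^2)"
    using den \<open>0 < c * (norm s)^2\<close> by (intro frac_le) (auto intro: order_trans[OF _ \<open>\<bar>p\<bar> * norm w \<le> _\<close>])
  then show ?thesis using \<open>0 < q\<close> \<open>s \<noteq> 0\<close> by (simp add: field_simps power2_eq_square)
qed

lemma lbfgs_update_upper_bound:
  assumes lower: "\<And>v. m * (norm v)^2 \<le> v \<bullet> B v" and upper: "\<And>v. norm (B v) \<le> M * norm v"
    and "0 < m" "0 < cs" and curv: "cs * (norm s)^2 \<le> y \<bullet> s" and lip: "norm y \<le> L * norm s"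
    and "s \<noteq> 0"
  shows "norm (lbfgs_update B s y v) \<le> (M + L^2/cs + M^2/m) * norm v"
proof -
  have "\<bar>y \<bullet> v\<bar> \<le> L * norm s * norm v"
    using Cauchy_Schwarz_ineq2[of y v] mult_right_mono[OF lip norm_ge_zero[of v]] by linarith
  from norm_ratio_scaleR_le[OF this lip curv \<open>0 < cs\<close> \<open>s \<noteq> 0\<close>]
  have secant_term: "norm (((y \<bullet> v) / (y \<bullet> s)) *\<^sub>R y) \<le> L^2/cs * norm v" by (simp add: power2_eq_square)
  have "\<bar>s \<bullet> B v\<bar> \<le> M * norm s * norm v"
    using Cauchy_Schwarz_ineq2[of s "B v"] mult_left_mono[OF upper[of v] norm_ge_zero[of s]] by (simp add: mult_ac)
  from norm_ratio_scaleR_le[OF this upper lower \<open>0 < m\<close> \<open>s \<noteq> 0\<close>]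
  have seed_term: "norm (((s \<bullet> B v) / (s \<bullet> B s)) *\<^sub>R B s) \<le> M^2/m * norm v" by (simp add: power2_eq_square)
  have "norm (lbfgs_update B s y v)
      \<le> norm (B v + ((y \<bullet> v) / (y \<bullet> s)) *\<^sub>R y) + norm (((s \<bullet> B v) / (s \<bullet> B s)) *\<^sub>R B s)"
    unfolding lbfgs_update_def by (rule norm_triangle_ineq4)
  also have "\<dots> \<le> norm (B v) + norm (((y \<bullet> v) / (y \<bullet> s)) *\<^sub>R y) + norm (((s \<bullet> B v) / (s \<bullet> B s)) *\<^sub>R B s)"
    using norm_triangle_ineq by (rule add_right_mono)
  also have "\<dots> \<le> M * norm v + L^2/cs * norm v + M^2/m * norm v"
    using upper secant_term seed_term by (intro add_mono)
  finally show ?thesis by (simp add: algebra_simps)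
qed

definition well_conditioned :: "real \<Rightarrow> real \<Rightarrow> ('a::real_inner \<Rightarrow> 'a) \<Rightarrow> bool" where
  "well_conditioned m M B \<longleftrightarrow>
     linear B \<and> symmetric_op B \<and> (\<forall>v. m * (norm v)^2 \<le> v \<bullet> B v) \<and> (\<forall>v. norm (B v) \<le> M * norm v)"

lemma well_conditioned_mono:
  assumes "well_conditioned m M B" "m' \<le> m" "M \<le> M'"
  shows "well_conditioned m' M' B"
  using assms unfolding well_conditioned_def
  by (meson mult_right_mono norm_ge_zero order_trans zero_le_power2)

lemma well_conditioned_lbfgs_update:
  assumes "well_conditioned m M B" "0 < m" "0 < cs"
    and "cs * (norm s)^2 < y \<bullet> s" "norm y \<le> L * norm s"
  shows "well_conditioned (min m (cs/2) / (2 * (L^2/(cs*m) + 1))) (M + L^2/cs + M^2/m) (lbfgs_update B s y)"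
proof -
  have "s \<noteq> 0" using assms(4) by auto
  with assms show ?thesis unfolding well_conditioned_def
    using linear_lbfgs_update symmetric_lbfgs_update lbfgs_update_lower_bound lbfgs_update_upper_bound
    by (metis less_imp_le)
qed

lemma psd_foldl_lbfgs_update:
  assumes "linear B" "symmetric_op B" "psd_op B" "\<forall>j\<in>set js. P j \<longrightarrow> 0 \<le> y j \<bullet> s j"
  defines "B' \<equiv> foldl (\<lambda>B j. if P j then lbfgs_update B (s j) (y j) else B) B js"
  shows "linear B' \<and> symmetric_op B' \<and> psd_op B'"
  using assms(1-4) unfolding B'_def
proof (induction js arbitrary: B)
  case (Cons j js)
  let ?B = "if P j then lbfgs_update B (s j) (y j) else B"
  have "linear ?B \<and> symmetric_op ?B \<and> psd_op ?B"
    using Cons.prems linear_lbfgs_update symmetric_lbfgs_update psd_lbfgs_update by auto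
  then show ?case using Cons.IH[of ?B] Cons.prems(4) by simp
qed simp

lemma well_conditioned_lbfgs_step:
  assumes "well_conditioned m M B" "0 < m" "0 < cs"
    and "P \<longrightarrow> cs * (norm s)^2 < y \<bullet> s \<and> norm y \<le> L * norm s"
  shows "well_conditioned (min m (min m (cs/2) / (2 * (L^2/(cs*m) + 1)))) (max M (M + L^2/cs + M^2/m))
           (if P then lbfgs_update B s y else B)"
proof (cases P)
  case True
  then have "well_conditioned (min m (cs/2) / (2 * (L^2/(cs*m) + 1))) (M + L^2/cs + M^2/m) (lbfgs_update B s y)"
    using assms by (intro well_conditioned_lbfgs_update) auto
  with True show ?thesis by (simp add: well_conditioned_mono)
next
  case False
  with assms(1) show ?thesis by (simp add: well_conditioned_mono)
qed

text \<open>The bounds depend on the number of updates but not on the pairs: this is why the memory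
  limit matters.\<close>
lemma well_conditioned_foldl_lbfgs_update:
  fixes s y :: "'i \<Rightarrow> 'a::real_inner"
  assumes "0 < m" "0 < cs"
  shows "\<exists>m'>0. \<exists>M'. \<forall>B js. length js \<le> n \<longrightarrow> well_conditioned m M B \<longrightarrow>
           (\<forall>j\<in>set js. P j \<longrightarrow> cs * (norm (s j))^2 < y j \<bullet> s j \<and> norm (y j) \<le> L * norm (s j)) \<longrightarrow>
           well_conditioned m' M' (foldl (\<lambda>B j. if P j then lbfgs_update B (s j) (y j) else B) B js)"
  using assms(1)
proof (induction n arbitrary: m M)
  case 0
  then show ?case by auto
next
  case (Suc n)
  define m1 where "m1 = min m (min m (cs/2) / (2 * (L^2/(cs*m) + 1)))"
  define M1 where "M1 = max M (M + L^2/cs + M^2/m)"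
  have "0 < m1" unfolding m1_def using Suc.prems assms(2) by (simp add: add_nonneg_pos)
  then obtain m2 M2 where "0 < m2" and IH: "\<forall>B js. length js \<le> n \<longrightarrow> well_conditioned m1 M1 B \<longrightarrow>
           (\<forall>j\<in>set js. P j \<longrightarrow> cs * (norm (s j))^2 < y j \<bullet> s j \<and> norm (y j) \<le> L * norm (s j)) \<longrightarrow>
           well_conditioned m2 M2 (foldl (\<lambda>B j. if P j then lbfgs_update B (s j) (y j) else B) B js)"
    using Suc.IH by blast
  have fold: "well_conditioned (min m m2) (max M M2) (foldl (\<lambda>B j. if P j then lbfgs_update B (s j) (y j) else B) B js)"
    if len: "length js \<le> Suc n" and B: "well_conditioned m M B"
      and pairs: "\<forall>j\<in>set js. P j \<longrightarrow> cs * (norm (s j))^2 < y j \<bullet> s j \<and> norm (y j) \<le> L * norm (s j)"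
    for B :: "'a \<Rightarrow> 'a" and js
  proof (cases js)
    case Nil
    then show ?thesis using well_conditioned_mono[OF B] by simp
  next
    case (Cons j js')
    have "well_conditioned m1 M1 (if P j then lbfgs_update B (s j) (y j) else B)"
      unfolding m1_def M1_def using pairs Cons by (intro well_conditioned_lbfgs_step[OF B Suc.prems assms(2)]) simp
    then have "well_conditioned m2 M2
        (foldl (\<lambda>B j. if P j then lbfgs_update B (s j) (y j) else B) (if P j then lbfgs_update B (s j) (y j) else B) js')"
      using IH len pairs Cons by simp
    then have "well_conditioned (min m m2) (max M M2)
        (foldl (\<lambda>B j. if P j then lbfgs_update B (s j) (y j) else B) (if P j then lbfgs_update B (s j) (y j) else B) js')"
      by (rule well_conditioned_mono) auto
    then show ?thesis using Cons by simp
  qed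
  show ?case
  proof (rule exI[of _ "min m m2"], intro conjI exI[of _ "max M M2"] allI impI)
    show "0 < min m m2" using \<open>0 < m2\<close> Suc.prems by simp
  qed (rule fold)
qed

section \<open>Line searches\<close>

lemma has_real_derivative_along_line:
  fixes J :: "'a::real_inner \<Rightarrow> real"
  assumes "\<And>v. (J has_derivative (\<lambda>h. grad v \<bullet> h)) (at v)"
  shows "((\<lambda>t. J (x + t *\<^sub>R d)) has_real_derivative (grad (x + t *\<^sub>R d) \<bullet> d)) (at t)"
proof -
  have "((\<lambda>t. x + t *\<^sub>R d) has_derivative (\<lambda>h. h *\<^sub>R d)) (at t)"
    by (auto intro!: derivative_eq_intros)
  from has_derivative_compose[OF this assms]
  have "((\<lambda>t. J (x + t *\<^sub>R d)) has_derivative (\<lambda>h. grad (x + t *\<^sub>R d) \<bullet> (h *\<^sub>R d))) (at t)" .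
  moreover have "(\<lambda>h. grad (x + t *\<^sub>R d) \<bullet> (h *\<^sub>R d)) = (*) (grad (x + t *\<^sub>R d) \<bullet> d)"
    by (auto simp: mult.commute)
  ultimately show ?thesis unfolding has_field_derivative_def by simp
qed

text \<open>A minimiser of \<open>\<psi>\<close> on \<open>[0, t]\<close>: it lies strictly below the initial value, which is what keeps
  the corresponding point of a line search inside a sublevel set.\<close>
lemma exists_critical_point_below_start:
  fixes \<psi> \<psi>' :: "real \<Rightarrow> real"
  assumes deriv: "\<And>r. (\<psi> has_real_derivative \<psi>' r) (at r)"
    and "\<psi>' 0 < 0" "0 \<le> \<psi> t - \<psi> 0" "0 < t"
  shows "\<exists>\<xi>. 0 < \<xi> \<and> \<xi> < t \<and> \<psi> \<xi> < \<psi> 0 \<and> \<psi>' \<xi> = 0"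
proof -
  obtain e where "e > 0" and e: "\<And>h. 0 < h \<Longrightarrow> h < e \<Longrightarrow> \<psi> h < \<psi> 0"
    using DERIV_neg_dec_right[OF deriv \<open>\<psi>' 0 < 0\<close>] by auto
  have "continuous_on {0..t} \<psi>"
    by (rule continuous_at_imp_continuous_on) (meson deriv DERIV_isCont)
  from continuous_attains_inf[OF compact_Icc _ this]
  obtain \<xi> where \<xi>: "\<xi> \<in> {0..t}" and min: "\<And>r. r \<in> {0..t} \<Longrightarrow> \<psi> \<xi> \<le> \<psi> r"
    using \<open>0 < t\<close> by auto
  have "\<psi> \<xi> < \<psi> 0"
  proof -
    define h where "h = min (e/2) (t/2)"
    have "0 < h" "h < e" "h \<le> t" unfolding h_def using \<open>e > 0\<close> \<open>0 < t\<close> by auto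
    then show ?thesis using min[of h] e[of h] by fastforce
  qed
  moreover from this have "0 < \<xi>" "\<xi> < t"
    using \<xi> assms(3) by (auto simp: less_le)
  moreover have "\<psi>' \<xi> = 0"
  proof (rule DERIV_local_min[OF deriv])
    show "0 < min \<xi> (t - \<xi>)" using \<open>0 < \<xi>\<close> \<open>\<xi> < t\<close> by simp
    show "\<forall>r. \<bar>\<xi> - r\<bar> < min \<xi> (t - \<xi>) \<longrightarrow> \<psi> \<xi> \<le> \<psi> r"
      using min by (auto simp: abs_if split: if_splits)
  qed
  ultimately show ?thesis by blast
qed

lemma armijo_failure_bound:
  fixes J :: "'a::real_inner \<Rightarrow> real"
  assumes deriv: "\<And>v. (J has_derivative (\<lambda>h. grad v \<bullet> h)) (at v)"
    and lip: "L-lipschitz_on {v. J v \<le> lev} grad"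
    and "J x \<le> lev" "grad x \<bullet> d < 0" "0 < t" "0 < sgm" "sgm < 1"
    and fail: "\<not> armijo_ok J grad sgm x d t"
  shows "(1 - sgm) * - (grad x \<bullet> d) \<le> L * t * (norm d)^2"
proof -
  define g where "g = grad x \<bullet> d"
  define \<psi> where "\<psi> r = J (x + r *\<^sub>R d) - r * sgm * g" for r
  have D: "(\<psi> has_real_derivative (grad (x + r *\<^sub>R d) \<bullet> d - sgm * g)) (at r)" for r
    unfolding \<psi>_def by (rule derivative_eq_intros has_real_derivative_along_line[OF deriv] | simp)+
  have "grad (x + 0 *\<^sub>R d) \<bullet> d - sgm * g < 0"
    using \<open>sgm < 1\<close> \<open>grad x \<bullet> d < 0\<close> unfolding g_def by (simp add: algebra_simps mult_less_cancel_right2)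
  moreover have "0 \<le> \<psi> t - \<psi> 0" using fail unfolding \<psi>_def g_def armijo_ok_def by simp
  ultimately obtain \<xi> where "0 < \<xi>" "\<xi> < t" and below: "\<psi> \<xi> < \<psi> 0"
    and crit: "grad (x + \<xi> *\<^sub>R d) \<bullet> d - sgm * g = 0"
    using exists_critical_point_below_start[OF D] \<open>0 < t\<close> by blast
  have "\<xi> * sgm * g \<le> 0"
    using \<open>0 < \<xi>\<close> \<open>0 < sgm\<close> \<open>grad x \<bullet> d < 0\<close> unfolding g_def by (simp add: mult_nonneg_nonpos)
  then have "J (x + \<xi> *\<^sub>R d) \<le> lev" using below \<open>J x \<le> lev\<close> unfolding \<psi>_def by simp
  have "(1 - sgm) * - g = (grad (x + \<xi> *\<^sub>R d) - grad x) \<bullet> d"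
    using crit unfolding g_def by (simp add: algebra_simps)
  also have "\<dots> \<le> norm (grad (x + \<xi> *\<^sub>R d) - grad x) * norm d" by (rule norm_cauchy_schwarz)
  also have "\<dots> \<le> (L * norm (\<xi> *\<^sub>R d)) * norm d"
    using lipschitz_onD[OF lip, of "x + \<xi> *\<^sub>R d" x] \<open>J (x + \<xi> *\<^sub>R d) \<le> lev\<close> \<open>J x \<le> lev\<close>
    by (simp add: dist_norm mult_right_mono)
  also have "\<dots> = L * \<xi> * (norm d)^2" using \<open>0 < \<xi>\<close> by (simp add: power2_eq_square)
  also have "\<dots> \<le> L * t * (norm d)^2"
    using \<open>\<xi> < t\<close> lipschitz_on_nonneg[OF lip] by (intro mult_right_mono mult_left_mono) auto
  finally show ?thesis unfolding g_def .
qed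

lemma armijo_backtracking_step_lower_bound:
  fixes J :: "'a::real_inner \<Rightarrow> real"
  assumes deriv: "\<And>v. (J has_derivative (\<lambda>h. grad v \<bullet> h)) (at v)"
    and lip: "L-lipschitz_on {v. J v \<le> lev} grad" "0 < L" and "J x \<le> lev"
    and bt: "armijo_backtracking J grad beta sgm x d a" "0 < beta" "beta < 1" "0 < sgm" "sgm < 1"
    and descent: "m * (norm d)^2 \<le> - (grad x \<bullet> d)" "0 < m" "d \<noteq> 0"
  shows "min 1 (beta * ((1 - sgm) * m / L)) \<le> a"
proof -
  obtain i where a: "a = beta ^ i" and earlier: "\<And>j. j < i \<Longrightarrow> \<not> armijo_ok J grad sgm x d (beta ^ j)"
    using bt(1) unfolding armijo_backtracking_def by auto
  show ?thesis
  proof (cases i)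
    case 0
    then show ?thesis using a by simp
  next
    case (Suc i')
    have "0 < (norm d)^2" using \<open>d \<noteq> 0\<close> by simp
    then have "grad x \<bullet> d < 0" using descent by (smt (verit) mult_pos_pos)
    then have "(1 - sgm) * - (grad x \<bullet> d) \<le> L * beta ^ i' * (norm d)^2"
      using earlier[of i'] Suc bt
      by (intro armijo_failure_bound[OF deriv lip(1) \<open>J x \<le> lev\<close>]) auto
    moreover have "(1 - sgm) * (m * (norm d)^2) \<le> (1 - sgm) * - (grad x \<bullet> d)"
      using descent \<open>sgm < 1\<close> by (intro mult_left_mono) auto
    ultimately have "((1 - sgm) * m) * (norm d)^2 \<le> (L * beta ^ i') * (norm d)^2"
      by (simp add: algebra_simps)
    then have "(1 - sgm) * m / L \<le> beta ^ i'"
      using \<open>0 < (norm d)^2\<close> \<open>0 < L\<close> by (simp add: divide_le_eq mult.commute)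
    then have "beta * ((1 - sgm) * m / L) \<le> beta * beta ^ i'"
      using \<open>0 < beta\<close> by (intro mult_left_mono) auto
    then show ?thesis using a Suc by (simp add: min.coboundedI2)
  qed
qed

lemma wolfe_powell_step_lower_bound:
  assumes wp: "wolfe_powell J grad sgm eta x d a" "eta < 1"
    and lip: "L-lipschitz_on X grad" "0 < L" "x \<in> X" "x + a *\<^sub>R d \<in> X"
    and descent: "m * (norm d)^2 \<le> - (grad x \<bullet> d)" "d \<noteq> 0"
  shows "(1 - eta) * m / L \<le> a"
proof -
  have "0 < a" and curv: "eta * (grad x \<bullet> d) \<le> grad (x + a *\<^sub>R d) \<bullet> d"
    using wp(1) unfolding wolfe_powell_def by auto
  have "(1 - eta) * m * (norm d)^2 \<le> (1 - eta) * - (grad x \<bullet> d)"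
    using mult_left_mono[OF descent(1), of "1 - eta"] \<open>eta < 1\<close> by (simp add: mult.assoc)
  also have "\<dots> \<le> (grad (x + a *\<^sub>R d) - grad x) \<bullet> d"
    using curv by (simp add: algebra_simps)
  also have "\<dots> \<le> norm (grad (x + a *\<^sub>R d) - grad x) * norm d" by (rule norm_cauchy_schwarz)
  also have "\<dots> \<le> (L * norm (a *\<^sub>R d)) * norm d"
    using lipschitz_onD[OF lip(1,4,3)] by (simp add: dist_norm mult_right_mono)
  also have "\<dots> = L * a * (norm d)^2" using \<open>0 < a\<close> by (simp add: power2_eq_square)
  finally have "(1 - eta) * m \<le> L * a" using \<open>d \<noteq> 0\<close> by simp
  then show ?thesis using \<open>0 < L\<close> by (simp add: divide_le_eq mult.commute)
qed

section \<open>Integrals of operator-valued functions\<close>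

text \<open>Integrability theorems for continuous functions require the codomain to be of class \<open>banach\<close>,
  which \<open>'a \<Rightarrow>\<^sub>L 'a\<close> is only known to be for \<open>'a::banach\<close>; the sort \<open>{real_normed_vector, complete_space}\<close>
  is not registered as a subclass. We conjugate with an isometric copy of \<open>'a\<close> declared \<open>banach\<close>.\<close>
typedef 'a complete_copy = "UNIV :: 'a::{real_normed_vector,complete_space} set"
  morphisms uncopy copy by simp

setup_lifting type_definition_complete_copy

instantiation complete_copy :: ("{real_normed_vector,complete_space}") real_normed_vector
begin
lift_definition zero_complete_copy :: "'a complete_copy" is 0 .
lift_definition plus_complete_copy :: "'a complete_copy \<Rightarrow> 'a complete_copy \<Rightarrow> 'a complete_copy" is "(+)" .
lift_definition minus_complete_copy :: "'a complete_copy \<Rightarrow> 'a complete_copy \<Rightarrow> 'a complete_copy" is "(-)" .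
lift_definition uminus_complete_copy :: "'a complete_copy \<Rightarrow> 'a complete_copy" is uminus .
lift_definition scaleR_complete_copy :: "real \<Rightarrow> 'a complete_copy \<Rightarrow> 'a complete_copy" is scaleR .
lift_definition norm_complete_copy :: "'a complete_copy \<Rightarrow> real" is norm .
lift_definition sgn_complete_copy :: "'a complete_copy \<Rightarrow> 'a complete_copy" is sgn .
lift_definition dist_complete_copy :: "'a complete_copy \<Rightarrow> 'a complete_copy \<Rightarrow> real" is dist .
definition uniformity_complete_copy :: "('a complete_copy \<times> 'a complete_copy) filter" where
  "uniformity_complete_copy = (INF e\<in>{0 <..}. principal {(x, y). dist x y < e})"
definition open_complete_copy :: "'a complete_copy set \<Rightarrow> bool" where
  "open_complete_copy U \<longleftrightarrow> (\<forall>x\<in>U. eventually (\<lambda>(x', y). x' = x \<longrightarrow> y \<in> U) uniformity)"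
instance
proof
  show "uniformity = (INF e\<in>{0 <..}. principal {(x::'a complete_copy, y). dist x y < e})"
    by (simp add: uniformity_complete_copy_def)
  show "open U \<longleftrightarrow> (\<forall>x\<in>U. eventually (\<lambda>(x', y). x' = x \<longrightarrow> y \<in> U) uniformity)"
    for U :: "'a complete_copy set"
    by (simp add: open_complete_copy_def)
qed (transfer; auto simp: algebra_simps sgn_div_norm dist_norm norm_triangle_ineq)+
end

instance complete_copy :: ("{real_normed_vector,complete_space}") banach
proof
  fix X :: "nat \<Rightarrow> 'a complete_copy"
  assume "Cauchy X"
  then have "Cauchy (\<lambda>n. uncopy (X n))" unfolding Cauchy_def by (simp add: dist_complete_copy.rep_eq)
  then obtain l where "(\<lambda>n. uncopy (X n)) \<longlonglongrightarrow> l" using Cauchy_convergent_iff convergent_def by blast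
  then have "X \<longlonglongrightarrow> copy l"
    unfolding LIMSEQ_def dist_complete_copy.rep_eq by (simp add: copy_inverse)
  then show "convergent X" unfolding convergent_def by blast
qed

lemma bounded_linear_copy: "bounded_linear copy"
  by (rule bounded_linear_intro[where K=1])
     (simp_all add: plus_complete_copy_def scaleR_complete_copy_def norm_complete_copy.rep_eq copy_inverse)

lemma bounded_linear_uncopy: "bounded_linear uncopy"
  by (rule bounded_linear_intro[where K=1])
     (simp_all add: plus_complete_copy.rep_eq scaleR_complete_copy.rep_eq norm_complete_copy.rep_eq)

lemma integrable_continuous_blinfun:
  fixes f :: "real \<Rightarrow> ('a::{real_normed_vector,complete_space} \<Rightarrow>\<^sub>L 'a)"
  assumes "continuous_on {a..b} f"
  shows "f integrable_on {a..b}"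
proof -
  define C :: "'a \<Rightarrow>\<^sub>L 'a complete_copy" where "C = Blinfun copy"
  define U :: "'a complete_copy \<Rightarrow>\<^sub>L 'a" where "U = Blinfun uncopy"
  have "continuous_on {a..b} (\<lambda>t. C o\<^sub>L f t o\<^sub>L U)" by (intro continuous_intros assms)
  then obtain I where "((\<lambda>t. C o\<^sub>L f t o\<^sub>L U) has_integral I) {a..b}"
    using integrable_continuous_interval by blast
  moreover have "bounded_linear (\<lambda>A. U o\<^sub>L A o\<^sub>L C)"
    using bounded_bilinear.bounded_linear_left[OF bounded_bilinear_blinfun_compose]
      bounded_bilinear.bounded_linear_right[OF bounded_bilinear_blinfun_compose]
    by (rule bounded_linear_compose)
  ultimately have "((\<lambda>t. U o\<^sub>L (C o\<^sub>L f t o\<^sub>L U) o\<^sub>L C) has_integral (U o\<^sub>L I o\<^sub>L C)) {a..b}"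
    using has_integral_linear[of _ I "{a..b}" "\<lambda>A. U o\<^sub>L A o\<^sub>L C"] by (simp add: comp_def)
  moreover have "U o\<^sub>L (C o\<^sub>L f t o\<^sub>L U) o\<^sub>L C = f t" for t
    by (rule blinfun_eqI)
       (simp add: C_def U_def bounded_linear_Blinfun_apply bounded_linear_copy bounded_linear_uncopy copy_inverse)
  ultimately show ?thesis by (auto simp: integrable_on_def)
qed

lemma gradient_difference_eq_integral:
  fixes grad :: "'a::{real_inner,complete_space} \<Rightarrow> 'a" and H :: "'a \<Rightarrow> ('a \<Rightarrow>\<^sub>L 'a)"
  assumes deriv: "\<And>v. (grad has_derivative blinfun_apply (H v)) (at v)"
    and "continuous_on UNIV H" "continuous_on UNIV grad"
  shows "grad (a + s) - grad a = blinfun_apply (integral {0..1} (\<lambda>t::real. H (a + t *\<^sub>R s))) s"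
proof -
  have line: "continuous_on {0..1} (\<lambda>t::real. a + t *\<^sub>R s)" by (intro continuous_intros)
  have "((\<lambda>t. grad (a + t *\<^sub>R s)) has_vector_derivative blinfun_apply (H (a + t *\<^sub>R s)) s) (at t)" for t
  proof -
    have "((\<lambda>t. a + t *\<^sub>R s) has_derivative (\<lambda>h. h *\<^sub>R s)) (at t)"
      by (auto intro!: derivative_eq_intros)
    from has_derivative_compose[OF this deriv]
    show ?thesis unfolding has_vector_derivative_def by (simp add: blinfun.scaleR_right)
  qed
  moreover have "continuous_on {0..1} (\<lambda>t. grad (a + t *\<^sub>R s))"
    using line by (rule continuous_on_compose2[OF assms(3)]) simp
  ultimately have "((\<lambda>t. blinfun_apply (H (a + t *\<^sub>R s)) s) has_integral (grad (a + 1 *\<^sub>R s) - grad (a + 0 *\<^sub>R s))) {0..1}"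
    by (intro fundamental_theorem_of_calculus_interior) auto
  moreover have "(\<lambda>t::real. H (a + t *\<^sub>R s)) integrable_on {0..1}"
    by (intro integrable_continuous_blinfun continuous_on_compose2[OF assms(2) line]) simp
  ultimately show ?thesis by (simp add: blinfun_apply_integral integral_unique)
qed

section \<open>The safeguarded scaling factor\<close>

lemma slbfgs_tau_ok_iff:
  "slbfgs_tau_ok gv c0 C0 c1 c2 g s z t \<longleftrightarrow>
     (let wl = min c0 (c1 * norm g powr c2);
          wu = max C0 (ereal (inverse (c1 * norm g powr c2)));
          P = (\<lambda>r::real. min (max (ereal r) (ereal wl)) wu)
      in P ((z \<bullet> s) / (norm s)\<^sup>2) \<le> ereal t \<and>
         (if z \<bullet> s > 0 \<and> \<not> gv then ereal t \<le> P ((norm z)\<^sup>2 / (z \<bullet> s))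
          else ereal t \<le> P (norm z / norm s)))"
  unfolding slbfgs_tau_ok_def Let_def by auto

lemma slbfgs_tau_ok_lower_bound:
  assumes "slbfgs_tau_ok gv c0 C0 c1 c2 g s z t" "ereal c0 \<le> C0"
  shows "min c0 (c1 * norm g powr c2) \<le> t"
proof -
  define wl where "wl = min c0 (c1 * norm g powr c2)"
  define wu where "wu = max C0 (ereal (inverse (c1 * norm g powr c2)))"
  have "ereal wl \<le> ereal c0" unfolding wl_def by simp
  also have "\<dots> \<le> wu" unfolding wu_def using assms(2) by (simp add: le_max_iff_disj)
  finally have "ereal wl \<le> min (max (ereal ((z \<bullet> s) / (norm s)\<^sup>2)) (ereal wl)) wu"
    by (simp add: le_max_iff_disj)
  also have "\<dots> \<le> ereal t"
    using assms(1) unfolding slbfgs_tau_ok_iff Let_def wl_def[symmetric] wu_def[symmetric] by simp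
  finally have "wl \<le> t" by simp
  then show ?thesis unfolding wl_def .
qed

lemma slbfgs_tau_ok_upper_bound:
  assumes "slbfgs_tau_ok gv c0 C0 c1 c2 g s z t"
  shows "ereal t \<le> max C0 (ereal (inverse (c1 * norm g powr c2)))"
  using assms unfolding slbfgs_tau_ok_iff Let_def by (meson min.boundedE order_trans)

lemma clip_le_max: "min (max (ereal r) (ereal l)) u \<le> ereal (max r l)"
  by (rule order_trans[OF min.cobounded1]) (simp add: max_def)

lemma slbfgs_tau_ok_le_tau_z:
  assumes "slbfgs_tau_ok False c0 C0 c1 c2 g s z t" "0 < z \<bullet> s"
  shows "t \<le> max ((norm z)\<^sup>2 / (z \<bullet> s)) (min c0 (c1 * norm g powr c2))"
proof -
  have "ereal t \<le> min (max (ereal ((norm z)\<^sup>2 / (z \<bullet> s))) (ereal (min c0 (c1 * norm g powr c2))))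
                      (max C0 (ereal (inverse (c1 * norm g powr c2))))"
    using assms unfolding slbfgs_tau_ok_iff Let_def by simp
  also have "\<dots> \<le> ereal (max ((norm z)\<^sup>2 / (z \<bullet> s)) (min c0 (c1 * norm g powr c2)))" by (rule clip_le_max)
  finally show ?thesis by (simp only: ereal_less_eq)
qed

lemma slbfgs_tau_ok_le_tau_g:
  assumes "slbfgs_tau_ok gv c0 C0 c1 c2 g s z t" "gv \<or> \<not> 0 < z \<bullet> s"
  shows "t \<le> max (norm z / norm s) (min c0 (c1 * norm g powr c2))"
proof -
  have "ereal t \<le> min (max (ereal (norm z / norm s)) (ereal (min c0 (c1 * norm g powr c2))))
                      (max C0 (ereal (inverse (c1 * norm g powr c2))))"
    using assms unfolding slbfgs_tau_ok_iff Let_def by auto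
  also have "\<dots> \<le> ereal (max (norm z / norm s) (min c0 (c1 * norm g powr c2)))" by (rule clip_le_max)
  finally show ?thesis by (simp only: ereal_less_eq)
qed

lemma divide_le_if_le_mult:
  fixes a b c :: real
  assumes "0 \<le> b" "0 \<le> c" "a \<le> c * b"
  shows "a / b \<le> c"
  using assms by (cases "b = 0") (simp_all add: pos_divide_le_eq mult.commute)

section \<open>Sequences with uniform decrease\<close>

lemma finite_uniform_decrease_steps:
  fixes f :: "nat \<Rightarrow> real"
  assumes mono: "\<And>k. f (Suc k) \<le> f k" and decrease: "\<And>k. k \<in> A \<Longrightarrow> f (Suc k) \<le> f k - \<delta>"
    and "0 < \<delta>" and bounded: "\<And>k. b \<le> f k"
  shows "finite A"
proof (rule ccontr)
  assume "infinite A"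
  obtain N :: nat where N: "(f 0 - b) / \<delta> < N" using reals_Archimedean2 by blast
  obtain F where F: "finite F" "card F = N" "F \<subseteq> A" using infinite_arbitrarily_large[OF \<open>infinite A\<close>] by blast
  obtain n where n: "F \<subseteq> {..<n}" using F(1) finite_nat_bounded by blast
  have "real N * \<delta> = (\<Sum>k\<in>F. \<delta>)" using F by simp
  also have "\<dots> \<le> (\<Sum>k\<in>F. f k - f (Suc k))" using F decrease by (intro sum_mono) force
  also have "\<dots> \<le> (\<Sum>k<n. f k - f (Suc k))" using n mono by (intro sum_mono2) auto
  also have "\<dots> = f 0 - f n" by (rule sum_lessThan_telescope')
  also have "\<dots> \<le> f 0 - b" using bounded by simp
  finally have "real N \<le> (f 0 - b) / \<delta>" using \<open>0 < \<delta>\<close> by (simp add: le_divide_eq)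
  then show False using N by simp
qed

lemma tendsto_zero_if_finite_superlevel_sets:
  fixes f :: "nat \<Rightarrow> real"
  assumes "\<And>\<epsilon>. 0 < \<epsilon> \<Longrightarrow> finite {k. \<epsilon> \<le> f k}" "\<And>k. 0 \<le> f k"
  shows "f \<longlonglongrightarrow> 0"
  unfolding tendsto_iff dist_real_def
  by (simp add: assms cofinite_eq_sequentially[symmetric] eventually_cofinite not_less)

lemma cluster_point_zero_if_tendsto_zero:
  assumes "continuous_on UNIV g" "(\<lambda>k. norm (g (x k))) \<longlonglongrightarrow> 0" "strict_mono r" "(x \<circ> r) \<longlonglongrightarrow> l"
  shows "g l = 0"
proof -
  have "(\<lambda>k. norm (g ((x \<circ> r) k))) \<longlonglongrightarrow> norm (g l)"
    using continuous_on_tendsto_compose[OF assms(1,4)] by (intro tendsto_norm) simp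
  moreover have "(\<lambda>k. norm (g ((x \<circ> r) k))) \<longlonglongrightarrow> 0"
    using LIMSEQ_subseq_LIMSEQ[OF assms(2,3)] by (simp add: comp_def)
  ultimately show ?thesis using LIMSEQ_unique by fastforce
qed

section \<open>Runs that never stop\<close>

locale slbfgs_nonterminating =
  fixes J :: "'a::{real_inner,complete_space} \<Rightarrow> real"
    and grad :: "'a \<Rightarrow> 'a"
    and eps L c0 cs c1 c2 beta sgm eta :: real
    and C0 :: ereal and ell :: nat and armijo :: bool
    and x d :: "nat \<Rightarrow> 'a" and alpha tau :: "nat \<Rightarrow> real" and S :: "nat \<Rightarrow> ('a \<Rightarrow>\<^sub>L 'a)"
    and \<Omega> :: "'a set"
  assumes \<Omega>_def: "\<Omega> = {v. J v \<le> J (x 0)}"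
    and params: "0 \<le> c0" "ereal c0 \<le> C0" "0 < cs" "0 < c1" "0 < c2"
    and ls_params: "0 < sgm" "sgm < 1"
      "armijo \<longrightarrow> 0 < beta \<and> beta < 1"
      "\<not> armijo \<longrightarrow> sgm < eta \<and> eta < 1"
    and run: "slbfgs_run J grad eps ell c0 C0 cs c1 c2 armijo beta sgm eta x d alpha tau S"
    and deriv: "\<And>v. (J has_derivative (\<lambda>h. grad v \<bullet> h)) (at v)"
    and grad_continuous: "continuous_on UNIV grad"
    and bounded_below: "bdd_below (range J)"
    and lipschitz: "0 < L" "L-lipschitz_on \<Omega> grad"
    and S_bounded: "bdd_above (range (\<lambda>k. norm (S k)))"
    and seed_inverse_bounded: "c0 = 0 \<longrightarrow> (\<exists>M. \<forall>k. slbfgs_active grad eps x k \<longrightarrow>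
                 bij (slbfgs_B0 tau S k) \<and> bounded_linear (inv (slbfgs_B0 tau S k))
                 \<and> onorm (inv (slbfgs_B0 tau S k)) \<le> M)"
    and unbounded_C0: "C0 = \<infinity> \<longrightarrow>
       ((\<forall>k. slbfgs_active grad eps x (Suc k) \<longrightarrow>
            slbfgs_tau_ok True c0 C0 c1 c2 (grad (x (Suc k))) (x (Suc k) - x k)
              ((grad (x (Suc k)) - grad (x k)) - blinfun_apply (S (Suc k)) (x (Suc k) - x k))
              (tau (Suc k)))
        \<or> (\<exists>H :: 'a \<Rightarrow> ('a \<Rightarrow>\<^sub>L 'a).
              (\<forall>v. (grad has_derivative blinfun_apply (H v)) (at v)) \<and> continuous_on UNIV H \<and>
              (\<forall>k. slbfgs_active grad eps x (Suc k) \<longrightarrow>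
                 sym_psd (integral {0..1} (\<lambda>t::real. H (x k + t *\<^sub>R (x (Suc k) - x k))) - S (Suc k))) \<and>
              bdd_above ((\<lambda>k. norm (integral {0..1} (\<lambda>t::real. H (x k + t *\<^sub>R (x (Suc k) - x k)))
                                    - S (Suc k))) ` {k. slbfgs_active grad eps x (Suc k)})))"
    and nonstop: "\<And>k. eps < norm (grad (x (Suc k)))"
begin

abbreviation "sk k \<equiv> x (Suc k) - x k"
abbreviation "yk k \<equiv> grad (x (Suc k)) - grad (x k)"
abbreviation "zk k \<equiv> yk k - blinfun_apply (S (Suc k)) (sk k)"
abbreviation "B0 \<equiv> slbfgs_B0 tau S"
abbreviation "B \<equiv> slbfgs_B grad ell cs tau S x"

lemma active: "slbfgs_active grad eps x k"
  using nonstop unfolding slbfgs_active_def by blast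

lemma
  shows B_direction: "B k (d k) = - grad (x k)"
    and line_search: "if armijo then armijo_backtracking J grad beta sgm (x k) (d k) (alpha k)
                      else wolfe_powell J grad sgm eta (x k) (d k) (alpha k)"
    and x_Suc: "x (Suc k) = x k + alpha k *\<^sub>R d k"
    and tau_ok: "slbfgs_tau_ok False c0 C0 c1 c2 (grad (x (Suc k))) (sk k) (zk k) (tau (Suc k))"
  using run active[of k] nonstop[of k] unfolding slbfgs_run_def by blast+

lemma tau_0_pos: "0 < tau 0" and S_sym_psd: "sym_psd (S k)"
  using run unfolding slbfgs_run_def by simp_all

lemma tau_Suc_lower_bound:
  assumes "0 < \<epsilon>" "\<epsilon> \<le> norm (grad (x (Suc k)))"
  shows "min c0 (c1 * \<epsilon> powr c2) \<le> tau (Suc k)"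
proof -
  have "c1 * \<epsilon> powr c2 \<le> c1 * norm (grad (x (Suc k))) powr c2"
    using assms params by (intro mult_left_mono powr_mono2) auto
  then have "min c0 (c1 * \<epsilon> powr c2) \<le> min c0 (c1 * norm (grad (x (Suc k))) powr c2)" by simp
  also have "\<dots> \<le> tau (Suc k)" by (rule slbfgs_tau_ok_lower_bound[OF tau_ok params(2)])
  finally show ?thesis .
qed

lemma tau_nonneg: "0 \<le> tau k"
proof (cases k)
  case 0
  then show ?thesis using tau_0_pos by simp
next
  case (Suc j)
  have "0 \<le> min c0 (c1 * norm (grad (x (Suc j))) powr c2)" using params by simp
  also have "\<dots> \<le> tau (Suc j)" by (rule slbfgs_tau_ok_lower_bound[OF tau_ok params(2)])
  finally show ?thesis using Suc by simp
qed

lemma seed_linear_symmetric_psd: "linear (B0 k)" "symmetric_op (B0 k)" "psd_op (B0 k)"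
proof -
  have S: "bounded_linear (S k)" "symmetric_op (S k)" "psd_op (S k)"
    using S_sym_psd[of k] blinfun.bounded_linear_right by (auto simp: sym_psd_iff)
  have "B0 k = (\<lambda>v. tau k *\<^sub>R v + blinfun_apply (S k) v)" by (simp add: slbfgs_B0_def)
  then show "linear (B0 k)" "symmetric_op (B0 k)" "psd_op (B0 k)"
    using S tau_nonneg[of k]
    by (auto simp: bounded_linear.linear bounded_linear_add bounded_linear_scaleR_right
        symmetric_op_def psd_op_def inner_add_left inner_add_right)
qed

lemma stored_curvature: "slbfgs_stored grad cs x j \<Longrightarrow> cs * (norm (sk j))^2 < yk j \<bullet> sk j"
  by (simp add: slbfgs_stored_def)

lemma B_linear_symmetric_psd: "linear (B k) \<and> symmetric_op (B k) \<and> psd_op (B k)"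
  unfolding slbfgs_B_def using stored_curvature params(3)
  by (intro psd_foldl_lbfgs_update seed_linear_symmetric_psd)
     (smt (verit) mult_nonneg_nonneg zero_le_power2)

lemma descent_eq: "grad (x k) \<bullet> d k = - (d k \<bullet> B k (d k))"
  using B_direction[of k] by (metis inner_commute inner_minus_left minus_minus)

lemma descent: "grad (x k) \<bullet> d k \<le> 0"
  using B_linear_symmetric_psd[of k] unfolding descent_eq psd_op_def by simp

lemma alpha_pos: "0 < alpha k"
  using line_search[of k] ls_params(3)
  by (cases armijo) (auto simp: armijo_backtracking_def wolfe_powell_def)

lemma armijo_step: "J (x (Suc k)) \<le> J (x k) + alpha k * sgm * (grad (x k) \<bullet> d k)"
  using line_search[of k] x_Suc[of k]
  by (cases armijo) (auto simp: armijo_backtracking_def wolfe_powell_def armijo_ok_def)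

lemma J_decreasing: "J (x (Suc k)) \<le> J (x k)"
proof -
  have "alpha k * sgm * (grad (x k) \<bullet> d k) \<le> 0"
    using alpha_pos[of k] ls_params(1) descent[of k] by (simp add: mult_nonneg_nonpos)
  then show ?thesis using armijo_step[of k] by linarith
qed

lemma iterate_in_level_set: "x k \<in> \<Omega>"
  by (induction k) (use J_decreasing order_trans in \<open>auto simp: \<Omega>_def\<close>)

lemma yk_lipschitz: "norm (yk j) \<le> L * norm (sk j)"
  using lipschitz_onD[OF lipschitz(2) iterate_in_level_set iterate_in_level_set] by (simp add: dist_norm)

lemma S_norm_bounded: obtains SB where "0 \<le> SB" "\<And>k. norm (S k) \<le> SB"
proof -
  obtain SB where SB: "\<And>k. norm (S k) \<le> SB" using S_bounded by (auto simp: bdd_above_def)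
  moreover have "0 \<le> SB" using SB[of 0] norm_ge_zero order_trans by blast
  ultimately show thesis using that by blast
qed

lemma tau_Suc_bounded_if_C0_finite:
  assumes "C0 \<noteq> \<infinity>" "0 < \<epsilon>"
  shows "\<exists>T. \<forall>k. \<epsilon> \<le> norm (grad (x (Suc k))) \<longrightarrow> tau (Suc k) \<le> T"
proof -
  obtain C where C: "C0 = ereal C" using params(2) assms(1) by (cases C0) auto
  have "tau (Suc k) \<le> max C (inverse (c1 * \<epsilon> powr c2))" if "\<epsilon> \<le> norm (grad (x (Suc k)))" for k
  proof -
    have "tau (Suc k) \<le> max C (inverse (c1 * norm (grad (x (Suc k))) powr c2))"
      using slbfgs_tau_ok_upper_bound[OF tau_ok[of k]] C by (simp add: max_def split: if_splits)
    moreover have "inverse (c1 * norm (grad (x (Suc k))) powr c2) \<le> inverse (c1 * \<epsilon> powr c2)"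
      using that assms(2) params by (intro le_imp_inverse_le mult_left_mono powr_mono2) auto
    ultimately show ?thesis by (meson max.mono order_refl order_trans)
  qed
  then show ?thesis by blast
qed

lemma tau_Suc_bounded_secant:
  assumes "\<And>k. slbfgs_tau_ok True c0 C0 c1 c2 (grad (x (Suc k))) (sk k) (zk k) (tau (Suc k))"
  shows "\<exists>T. \<forall>k. tau (Suc k) \<le> T"
proof -
  obtain SB where SB: "0 \<le> SB" "\<And>k. norm (S k) \<le> SB" using S_norm_bounded by blast
  have "tau (Suc k) \<le> max (L + SB) c0" for k
  proof -
    have "norm (zk k) \<le> norm (yk k) + norm (blinfun_apply (S (Suc k)) (sk k))" by (rule norm_triangle_ineq4)
    also have "\<dots> \<le> L * norm (sk k) + SB * norm (sk k)"
      using yk_lipschitz[of k] order_trans[OF norm_blinfun mult_right_mono[OF SB(2) norm_ge_zero]]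
      by (rule add_mono)
    finally have "norm (zk k) / norm (sk k) \<le> L + SB"
      using SB(1) lipschitz(1) by (intro divide_le_if_le_mult) (simp_all add: algebra_simps)
    then show ?thesis using slbfgs_tau_ok_le_tau_g[OF assms] by (meson max.mono min.cobounded1 order_trans)
  qed
  then show ?thesis by blast
qed

lemma tau_Suc_bounded_curvature:
  assumes H: "\<forall>v. (grad has_derivative blinfun_apply (H v)) (at v)" "continuous_on UNIV H"
    and G: "\<And>k. sym_psd (integral {0..1} (\<lambda>t::real. H (x k + t *\<^sub>R sk k)) - S (Suc k))"
      "\<And>k. norm (integral {0..1} (\<lambda>t::real. H (x k + t *\<^sub>R sk k)) - S (Suc k)) \<le> NG"
  shows "\<exists>T. \<forall>k. tau (Suc k) \<le> T"
proof -
  define G where "G k = integral {0..1} (\<lambda>t::real. H (x k + t *\<^sub>R sk k)) - S (Suc k)" for k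
  have "0 \<le> NG" using G(2)[of 0] norm_ge_zero order_trans by blast
  have zk_eq: "zk k = blinfun_apply (G k) (sk k)" for k
    using gradient_difference_eq_integral[OF H(1)[rule_format] H(2) grad_continuous, of "x k" "sk k"]
    by (simp add: G_def blinfun.diff_left)
  have "tau (Suc k) \<le> max NG c0" for k
  proof (cases "0 < zk k \<bullet> sk k")
    case True
    have G_props: "linear (G k)" "symmetric_op (G k)" "psd_op (G k)"
      using G(1)[of k] blinfun.bounded_linear_right bounded_linear.linear
      unfolding G_def[symmetric] sym_psd_iff by blast+
    have "(norm (zk k))\<^sup>2 \<le> norm (G k) * (sk k \<bullet> G k (sk k))"
      unfolding zk_eq by (rule psd_norm_apply_sq_le[OF G_props]) (simp add: norm_blinfun)
    also have "\<dots> \<le> NG * (zk k \<bullet> sk k)"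
      using G(2)[of k] True unfolding zk_eq G_def[symmetric] by (simp add: inner_commute mult_right_mono)
    finally have "(norm (zk k))\<^sup>2 / (zk k \<bullet> sk k) \<le> NG" using True by (simp add: pos_divide_le_eq)
    then show ?thesis
      using slbfgs_tau_ok_le_tau_z[OF tau_ok True] by (meson max.mono min.cobounded1 order_trans)
  next
    case False
    have "norm (zk k) \<le> NG * norm (sk k)"
      unfolding zk_eq using order_trans[OF norm_blinfun mult_right_mono[OF G(2)[unfolded G_def[symmetric]] norm_ge_zero]] .
    then have "norm (zk k) / norm (sk k) \<le> NG" using \<open>0 \<le> NG\<close> by (intro divide_le_if_le_mult) auto
    then show ?thesis
      using slbfgs_tau_ok_le_tau_g[OF tau_ok] False by (meson max.mono min.cobounded1 order_trans)
  qed
  then show ?thesis by blast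
qed

lemma tau_bounded:
  assumes "0 < \<epsilon>"
  shows "\<exists>T. \<forall>k. \<epsilon> \<le> norm (grad (x k)) \<longrightarrow> tau k \<le> T"
proof -
  have "\<exists>T. \<forall>k. \<epsilon> \<le> norm (grad (x (Suc k))) \<longrightarrow> tau (Suc k) \<le> T"
  proof (cases "C0 = \<infinity>")
    case True
    then consider
      "\<And>k. slbfgs_tau_ok True c0 C0 c1 c2 (grad (x (Suc k))) (sk k) (zk k) (tau (Suc k))"
    | H NG where "\<forall>v. (grad has_derivative blinfun_apply (H v)) (at v)" "continuous_on UNIV H"
        "\<And>k. sym_psd (integral {0..1} (\<lambda>t::real. H (x k + t *\<^sub>R sk k)) - S (Suc k))"
        "\<And>k. norm (integral {0..1} (\<lambda>t::real. H (x k + t *\<^sub>R sk k)) - S (Suc k)) \<le> NG"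
      using unbounded_C0 active by (auto simp: bdd_above_def)
    then show ?thesis
      by cases (use tau_Suc_bounded_secant tau_Suc_bounded_curvature in blast)+
  qed (use tau_Suc_bounded_if_C0_finite assms in blast)
  then obtain T where T: "\<And>k. \<epsilon> \<le> norm (grad (x (Suc k))) \<Longrightarrow> tau (Suc k) \<le> T" by blast
  have "tau k \<le> max (tau 0) T" if "\<epsilon> \<le> norm (grad (x k))" for k
    using that T by (cases k) (auto simp: le_max_iff_disj)
  then show ?thesis by blast
qed
lemma seed_upper_bound:
  assumes "0 < \<epsilon>"
  shows "\<exists>M. \<forall>k v. \<epsilon> \<le> norm (grad (x k)) \<longrightarrow> norm (B0 k v) \<le> M * norm v"
proof -
  obtain T where T: "\<And>k. \<epsilon> \<le> norm (grad (x k)) \<Longrightarrow> tau k \<le> T" using tau_bounded[OF assms] by blast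
  obtain SB where SB: "\<And>k. norm (S k) \<le> SB" using S_norm_bounded by blast
  have "norm (B0 k v) \<le> (T + SB) * norm v" if "\<epsilon> \<le> norm (grad (x k))" for k v
  proof -
    have "norm (B0 k v) \<le> norm (tau k *\<^sub>R v) + norm (blinfun_apply (S k) v)"
      unfolding slbfgs_B0_def by (rule norm_triangle_ineq)
    also have "\<dots> \<le> T * norm v + SB * norm v"
      using T[OF that] tau_nonneg[of k] order_trans[OF norm_blinfun mult_right_mono[OF SB norm_ge_zero]]
      by (intro add_mono) (simp_all add: mult_right_mono)
    finally show ?thesis by (simp add: algebra_simps)
  qed
  then show ?thesis by blast
qed

lemma seed_lower_bound:
  assumes "0 < \<epsilon>"
  shows "\<exists>m>0. \<forall>k v. \<epsilon> \<le> norm (grad (x k)) \<longrightarrow> m * (norm v)^2 \<le> v \<bullet> B0 k v"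
proof (cases "c0 = 0")
  case True
  obtain K where K: "\<And>k. bij (B0 k)" "\<And>k. bounded_linear (inv (B0 k))" "\<And>k. onorm (inv (B0 k)) \<le> K"
    using seed_inverse_bounded True active by blast
  obtain M where M: "\<And>k v. \<epsilon> \<le> norm (grad (x k)) \<Longrightarrow> norm (B0 k v) \<le> M * norm v"
    using seed_upper_bound[OF assms] by blast
  show ?thesis
    using psd_lower_bound_of_inverse_bound[OF seed_linear_symmetric_psd M K] by (intro exI[of _ "1 / ((max K 1)^2 * max M 1)"]) auto
next
  case False
  define m where "m = min (tau 0) (min c0 (c1 * \<epsilon> powr c2))"
  have "m \<le> tau k" if "\<epsilon> \<le> norm (grad (x k))" for k
    using that tau_Suc_lower_bound[OF assms] by (cases k) (auto simp: m_def intro: min.coboundedI2)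
  moreover have "0 \<le> v \<bullet> blinfun_apply (S k) v" for k v
    using S_sym_psd[of k] by (simp add: sym_psd_def)
  ultimately have "m * (norm v)^2 \<le> v \<bullet> B0 k v" if "\<epsilon> \<le> norm (grad (x k))" for k v
    using that by (simp add: slbfgs_B0_def inner_add_right power2_norm_eq_inner[symmetric] add_increasing2 mult_right_mono)
  moreover have "0 < m" using False params tau_0_pos assms by (simp add: m_def)
  ultimately show ?thesis by blast
qed

lemma B_well_conditioned:
  assumes "0 < \<epsilon>"
  shows "\<exists>m>0. \<exists>M. \<forall>k. \<epsilon> \<le> norm (grad (x k)) \<longrightarrow> well_conditioned m M (B k)"
proof -
  obtain m0 where "0 < m0" and lower: "\<And>k v. \<epsilon> \<le> norm (grad (x k)) \<Longrightarrow> m0 * (norm v)^2 \<le> v \<bullet> B0 k v"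
    using seed_lower_bound[OF assms] by blast
  obtain M0 where upper: "\<And>k v. \<epsilon> \<le> norm (grad (x k)) \<Longrightarrow> norm (B0 k v) \<le> M0 * norm v"
    using seed_upper_bound[OF assms] by blast
  obtain m M where "0 < m" and fold: "\<And>B' js. length js \<le> ell \<Longrightarrow> well_conditioned m0 M0 B' \<Longrightarrow>
      (\<forall>j\<in>set js. slbfgs_stored grad cs x j \<longrightarrow> cs * (norm (sk j))^2 < yk j \<bullet> sk j \<and> norm (yk j) \<le> L * norm (sk j)) \<Longrightarrow>
      well_conditioned m M (foldl (\<lambda>B j. if slbfgs_stored grad cs x j then lbfgs_update B (sk j) (yk j) else B) B' js)"
    using well_conditioned_foldl_lbfgs_update[OF \<open>0 < m0\<close> params(3), of ell M0 "slbfgs_stored grad cs x" sk yk L]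
    by blast
  have "well_conditioned m M (B k)" if "\<epsilon> \<le> norm (grad (x k))" for k
  proof -
    have "length [k - ell..<k] \<le> ell" by simp
    moreover have "well_conditioned m0 M0 (B0 k)"
      using lower[OF that] upper[OF that] seed_linear_symmetric_psd by (simp add: well_conditioned_def)
    ultimately show ?thesis
      unfolding slbfgs_B_def by (rule fold) (simp add: stored_curvature yk_lipschitz)
  qed
  with \<open>0 < m\<close> show ?thesis by blast
qed

lemma step_size_lower_bound:
  assumes "well_conditioned m M (B k)" "0 < m" "d k \<noteq> 0"
  shows "(if armijo then min 1 (beta * ((1 - sgm) * m / L)) else (1 - eta) * m / L) \<le> alpha k"
proof -
  have descent_bound: "m * (norm (d k))^2 \<le> - (grad (x k) \<bullet> d k)"
    using assms(1) unfolding well_conditioned_def descent_eq by simp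
  show ?thesis
  proof (cases armijo)
    case True
    have "J (x k) \<le> J (x 0)" using iterate_in_level_set[of k] by (simp add: \<Omega>_def)
    then have "min 1 (beta * ((1 - sgm) * m / L)) \<le> alpha k"
      using True line_search[of k] ls_params descent_bound assms(2,3)
      by (intro armijo_backtracking_step_lower_bound[OF deriv lipschitz(2)[unfolded \<Omega>_def] lipschitz(1)]) auto
    with True show ?thesis by simp
  next
    case False
    have next_in_level_set: "x k + alpha k *\<^sub>R d k \<in> \<Omega>" using iterate_in_level_set[of "Suc k"] x_Suc[of k] by simp
    have "wolfe_powell J grad sgm eta (x k) (d k) (alpha k)" "eta < 1"
      using False line_search[of k] ls_params(4) by simp_all
    from wolfe_powell_step_lower_bound[OF this lipschitz(2,1) iterate_in_level_set next_in_level_set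
        descent_bound assms(3)]
    have "(1 - eta) * m / L \<le> alpha k" .
    with False show ?thesis by simp
  qed
qed

lemma uniform_decrease:
  assumes "0 < \<epsilon>"
  shows "\<exists>\<delta>>0. \<forall>k. \<epsilon> \<le> norm (grad (x k)) \<longrightarrow> J (x (Suc k)) \<le> J (x k) - \<delta>"
proof -
  obtain m M0 where "0 < m" and wc0: "\<And>k. \<epsilon> \<le> norm (grad (x k)) \<Longrightarrow> well_conditioned m M0 (B k)"
    using B_well_conditioned[OF assms] by blast
  define M where "M = max M0 1"
  have "0 < M" by (simp add: M_def)
  have wc: "well_conditioned m M (B k)" if "\<epsilon> \<le> norm (grad (x k))" for k
    using wc0[OF that] by (rule well_conditioned_mono) (simp_all add: M_def)
  define a where "a = (if armijo then min 1 (beta * ((1 - sgm) * m / L)) else (1 - eta) * m / L)"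
  have "0 < a" using ls_params \<open>0 < m\<close> lipschitz(1) by (simp add: a_def)
  define \<delta> where "\<delta> = a * sgm * (m * (\<epsilon> / M)^2)"
  have "0 < \<delta>" using \<open>0 < a\<close> ls_params(1) \<open>0 < m\<close> assms \<open>0 < M\<close> by (simp add: \<delta>_def)
  have "J (x (Suc k)) \<le> J (x k) - \<delta>" if large: "\<epsilon> \<le> norm (grad (x k))" for k
  proof -
    have "\<epsilon> \<le> M * norm (d k)"
      using large wc[OF large] B_direction[of k] unfolding well_conditioned_def by (metis norm_minus_cancel order_trans)
    then have "\<epsilon> / M \<le> norm (d k)" using \<open>0 < M\<close> by (simp add: divide_le_eq mult.commute)
    moreover have "0 < \<epsilon> / M" using assms \<open>0 < M\<close> by simp
    ultimately have "d k \<noteq> 0" by auto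
    have "m * (\<epsilon> / M)^2 \<le> m * (norm (d k))^2"
      using \<open>\<epsilon> / M \<le> norm (d k)\<close> assms \<open>0 < M\<close> \<open>0 < m\<close> by (intro mult_left_mono power_mono) auto
    also have "\<dots> \<le> - (grad (x k) \<bullet> d k)"
      using wc[OF large] unfolding well_conditioned_def descent_eq by simp
    finally have "m * (\<epsilon> / M)^2 \<le> - (grad (x k) \<bullet> d k)" .
    moreover have "a \<le> alpha k"
      using step_size_lower_bound[OF wc[OF large] \<open>0 < m\<close> \<open>d k \<noteq> 0\<close>] by (simp add: a_def)
    ultimately have "\<delta> \<le> alpha k * sgm * - (grad (x k) \<bullet> d k)"
      unfolding \<delta>_def using \<open>0 < a\<close> \<open>0 < m\<close> ls_params(1) by (intro mult_mono) auto
    then show ?thesis using armijo_step[of k] by simp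
  qed
  with \<open>0 < \<delta>\<close> show ?thesis by blast
qed

lemma finite_large_gradients:
  assumes "0 < \<epsilon>"
  shows "finite {k. \<epsilon> \<le> norm (grad (x k))}"
proof -
  obtain \<delta> where "0 < \<delta>" and decrease: "\<And>k. \<epsilon> \<le> norm (grad (x k)) \<Longrightarrow> J (x (Suc k)) \<le> J (x k) - \<delta>"
    using uniform_decrease[OF assms] by blast
  obtain b where "\<And>v. b \<le> J v" using bounded_below by (auto simp: bdd_below_def)
  then show ?thesis
    using J_decreasing decrease \<open>0 < \<delta>\<close> by (intro finite_uniform_decrease_steps[of "\<lambda>k. J (x k)"]) auto
qed

lemma gradient_tendsto_zero: "(\<lambda>k. norm (grad (x k))) \<longlonglongrightarrow> 0"
  by (intro tendsto_zero_if_finite_superlevel_sets finite_large_gradients) auto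

lemma limit_points_stationary: "strict_mono r \<Longrightarrow> (x \<circ> r) \<longlonglongrightarrow> l \<Longrightarrow> grad l = 0"
  by (rule cluster_point_zero_if_tendsto_zero[OF grad_continuous gradient_tendsto_zero])

lemma eps_nonpos: "eps \<le> 0"
proof (rule ccontr)
  assume "\<not> eps \<le> 0"
  then have "finite {k. eps \<le> norm (grad (x k))}" by (intro finite_large_gradients) simp
  moreover have "range Suc \<subseteq> {k. eps \<le> norm (grad (x k))}" using nonstop by (auto intro: less_imp_le)
  ultimately have "finite (range Suc)" by (rule finite_subset[rotated])
  then show False by (simp add: finite_image_iff)
qed

end

theorem theorem4p8:
  fixes J :: "'a::{real_inner,complete_space} \<Rightarrow> real"
    and grad :: "'a \<Rightarrow> 'a"
    and eps L c0 cs c1 c2 beta sgm eta :: real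
    and C0 :: ereal and ell :: nat and armijo :: bool
    and x d :: "nat \<Rightarrow> 'a" and alpha tau :: "nat \<Rightarrow> real" and S :: "nat \<Rightarrow> ('a \<Rightarrow>\<^sub>L 'a)"
  defines "\<Omega> \<equiv> {v. J v \<le> J (x 0)}"
  assumes params: "0 \<le> eps" "0 \<le> c0" "ereal c0 \<le> C0" "0 < cs" "0 < c1" "0 < c2"
    and ls_params: "0 < sgm" "sgm < 1"
      "armijo \<longrightarrow> 0 < beta \<and> beta < 1"
      "\<not> armijo \<longrightarrow> sgm < eta \<and> eta < 1"
    and run: "slbfgs_run J grad eps ell c0 C0 cs c1 c2 armijo beta sgm eta x d alpha tau S"
    \<comment> \<open>1) continuously differentiable and bounded below\<close>
    and A1: "\<And>v. (J has_derivative (\<lambda>h. grad v \<bullet> h)) (at v)" "continuous_on UNIV grad"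
      "bdd_below (range J)"
    \<comment> \<open>2) gradient Lipschitz on the level set\<close>
    and A2: "0 < L" "L-lipschitz_on \<Omega> grad"
    \<comment> \<open>3) structured parts bounded\<close>
    and A3: "bdd_above (range (\<lambda>k. norm (S k)))"
    \<comment> \<open>4) uniform continuity in the Armijo case\<close>
    and A4: "armijo \<longrightarrow> (\<exists>\<delta>>0.
                 uniformly_continuous_on {v. \<exists>w\<in>\<Omega>. norm (v - w) < \<delta>} J \<or>
                 uniformly_continuous_on {v. \<exists>w\<in>\<Omega>. norm (v - w) < \<delta>} grad)"
    \<comment> \<open>5) c0 = 0 only if the inverses of the seed operators are uniformly bounded\<close>
    and A5: "c0 = 0 \<longrightarrow> (\<exists>M. \<forall>k. slbfgs_active grad eps x k \<longrightarrow>
                 bij (slbfgs_B0 tau S k) \<and> bounded_linear (inv (slbfgs_B0 tau S k))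
                 \<and> onorm (inv (slbfgs_B0 tau S k)) \<le> M)"
    \<comment> \<open>6) C0 = \<infinity> only with the [tau^s, tau^g] variant or the curvature condition\<close>
    and A6: "C0 = \<infinity> \<longrightarrow>
       ((\<forall>k. slbfgs_active grad eps x (Suc k) \<longrightarrow>
            slbfgs_tau_ok True c0 C0 c1 c2 (grad (x (Suc k))) (x (Suc k) - x k)
              ((grad (x (Suc k)) - grad (x k)) - blinfun_apply (S (Suc k)) (x (Suc k) - x k))
              (tau (Suc k)))
        \<or> (\<exists>H :: 'a \<Rightarrow> ('a \<Rightarrow>\<^sub>L 'a).
              (\<forall>v. (grad has_derivative blinfun_apply (H v)) (at v)) \<and> continuous_on UNIV H \<and>
              (\<forall>k. slbfgs_active grad eps x (Suc k) \<longrightarrow>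
                 sym_psd (integral {0..1} (\<lambda>t::real. H (x k + t *\<^sub>R (x (Suc k) - x k))) - S (Suc k))) \<and>
              bdd_above ((\<lambda>k. norm (integral {0..1} (\<lambda>t::real. H (x k + t *\<^sub>R (x (Suc k) - x k)))
                                    - S (Suc k))) ` {k. slbfgs_active grad eps x (Suc k)})))"
  shows "(eps = 0 \<longrightarrow>
            (\<exists>k. grad (x (Suc k)) = 0) \<or>
            ((\<lambda>k. norm (grad (x k))) \<longlonglongrightarrow> 0 \<and>
             (\<forall>xb. (\<exists>r. strict_mono r \<and> (x \<circ> r) \<longlonglongrightarrow> xb) \<longrightarrow> grad xb = 0)))
       \<and> (0 < eps \<longrightarrow> (\<exists>k. norm (grad (x (Suc k))) \<le> eps))"
proof (cases "\<exists>k. norm (grad (x (Suc k))) \<le> eps")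
  case True
  then show ?thesis by auto
next
  case False
  then have nonstop: "\<And>k. eps < norm (grad (x (Suc k)))" by (simp add: not_le)
  interpret slbfgs_nonterminating J grad eps L c0 cs c1 c2 beta sgm eta C0 ell armijo x d alpha tau S \<Omega>
    using params(2-6) ls_params run A1 A2 A3 A5 A6 nonstop by unfold_locales (simp_all add: \<Omega>_def)
  show ?thesis using eps_nonpos params(1) gradient_tendsto_zero limit_points_stationary by auto
qed

end
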